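(* For all positive integers $r$ and $N$ there exists a partition $\mathbb N=A_1\cup A_2\cup\cdots\cup A_r$ into pairwise disjoint sets such that (i) $A_i-n$ is a central set for every $1\le i\le r$ and every $1\le n\le N$; and (ii) for every $n>N$, exactly one of the sets $A_1-n,A_2-n,\dots,A_r-n$ is a central set.
   Context: $\mathbb N=\{0,1,2,\dots\}$; for $A\subseteq\mathbb N$ and $n\in\mathbb N$, $A-n=\{m\in\mathbb N: m+n\in A\}$. $\beta\mathbb N$ is the set of ultrafilters on $\mathbb N$ with addition $A\in p+q$ iff $\{n:A-n\in p\}\in q$; a minimal idempotent is a non-principal ultrafilter $p$ with $p+p=p$ lying in the smallest two-sided ideal of $\beta\mathbb N$; a set is central if it belongs to some minimal idempotent. *)

theory Defs
  imports Main
begin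

definition ultrafilter_nat :: "nat set set \<Rightarrow> bool" where
  "ultrafilter_nat p \<longleftrightarrow>
     UNIV \<in> p \<and> {} \<notin> p \<and>
     (\<forall>A B. A \<in> p \<and> A \<subseteq> B \<longrightarrow> B \<in> p) \<and>
     (\<forall>A B. A \<in> p \<and> B \<in> p \<longrightarrow> A \<inter> B \<in> p) \<and>
     (\<forall>A. A \<in> p \<or> - A \<in> p)"

definition betaN :: "nat set set set" where
  "betaN = {p. ultrafilter_nat p}"

definition shift :: "nat set \<Rightarrow> nat \<Rightarrow> nat set" where
  "shift A n = {m. m + n \<in> A}"

definition uplus :: "nat set set \<Rightarrow> nat set set \<Rightarrow> nat set set" where
  "uplus p q = {A. {n. shift A n \<in> p} \<in> q}"

definition nonprincipal :: "nat set set \<Rightarrow> bool" where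
  "nonprincipal p \<longleftrightarrow> (\<forall>n. {n} \<notin> p)"

definition two_sided_ideal :: "nat set set set \<Rightarrow> bool" where
  "two_sided_ideal I \<longleftrightarrow> I \<noteq> {} \<and> I \<subseteq> betaN \<and>
     (\<forall>p\<in>betaN. \<forall>q\<in>I. uplus p q \<in> I \<and> uplus q p \<in> I)"

definition smallest_ideal :: "nat set set set" where
  "smallest_ideal = \<Inter>{I. two_sided_ideal I}"

definition minimal_idempotent :: "nat set set \<Rightarrow> bool" where
  "minimal_idempotent p \<longleftrightarrow>
     p \<in> betaN \<and> nonprincipal p \<and> uplus p p = p \<and> p \<in> smallest_ideal"

definition central :: "nat set \<Rightarrow> bool" where
  "central A \<longleftrightarrow> (\<exists>p. minimal_idempotent p \<and> A \<in> p)"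

end

theory Submission
  imports Defs
begin

text \<open>Colour \<open>x \<le> N\<close> by \<open>1\<close> and \<open>x > N\<close> by \<open>1 + (k mod r)\<close>, where \<open>k\<close> is the least exponent with
  \<open>x mod 2\<^sup>k > N\<close>. For \<open>n > N\<close>, adding a multiple of \<open>2\<^sup>n\<close> to \<open>n\<close> does not change its colour, and
  every idempotent ultrafilter contains the multiples of \<open>2\<^sup>n\<close>; hence \<open>A\<^sub>i - n\<close> lies in some (indeed
  every) minimal idempotent exactly when \<open>i\<close> is the colour of \<open>n\<close>.

  For \<open>n \<le> N\<close> and \<open>y = 2\<^sup>k(2t + 1)\<close> with \<open>2\<^sup>N\<close> dividing \<open>y\<close>, the colour of \<open>n + y\<close> is
  \<open>1 + ((k + 1) mod r)\<close>. Dilating a minimal idempotent by \<open>2\<^sup>j\<close> gives again a minimal idempotent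
  and adds \<open>j\<close> to the 2-adic valuations of its members, so each class of the 2-adic valuation
  modulo \<open>r\<close> is central; intersected with the multiples of \<open>2\<^sup>N\<close> it lies in the right \<open>A\<^sub>i - n\<close>.

  Minimal idempotents are constructed from scratch: Zorn's lemma yields a minimal closed right
  ideal of \<open>\<beta>\<nat>\<close> consisting of free ultrafilters, which lies in the smallest ideal and contains
  an idempotent by the Ellis--Numakura lemma.\<close>

section \<open>Ultrafilters on the naturals\<close>

lemma betaN_iff [simp]: "p \<in> betaN \<longleftrightarrow> ultrafilter_nat p"
  by (simp add: betaN_def)

lemma ultrafilter_UNIV: "ultrafilter_nat p \<Longrightarrow> UNIV \<in> p"
  and ultrafilter_empty: "ultrafilter_nat p \<Longrightarrow> {} \<notin> p"
  and ultrafilter_mono: "ultrafilter_nat p \<Longrightarrow> A \<in> p \<Longrightarrow> A \<subseteq> B \<Longrightarrow> B \<in> p"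
  and ultrafilter_Int: "ultrafilter_nat p \<Longrightarrow> A \<in> p \<Longrightarrow> B \<in> p \<Longrightarrow> A \<inter> B \<in> p"
  unfolding ultrafilter_nat_def by blast+

lemma ultrafilter_Int_iff: "ultrafilter_nat p \<Longrightarrow> A \<inter> B \<in> p \<longleftrightarrow> A \<in> p \<and> B \<in> p"
  by (meson inf_le1 inf_le2 ultrafilter_Int ultrafilter_mono)

lemma ultrafilter_Int_nonempty: "ultrafilter_nat p \<Longrightarrow> A \<in> p \<Longrightarrow> B \<in> p \<Longrightarrow> A \<inter> B \<noteq> {}"
  using ultrafilter_Int ultrafilter_empty by fastforce

lemma ultrafilter_Compl_iff: "ultrafilter_nat p \<Longrightarrow> - A \<in> p \<longleftrightarrow> A \<notin> p"
  using ultrafilter_Int_nonempty[of p A "- A"] unfolding ultrafilter_nat_def by blast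

lemma ultrafilter_subset_eq: "ultrafilter_nat p \<Longrightarrow> ultrafilter_nat q \<Longrightarrow> p \<subseteq> q \<Longrightarrow> p = q"
  by (metis subsetI subset_antisym ultrafilter_Compl_iff in_mono)

lemma ultrafilter_finite_Union:
  assumes "finite F" "ultrafilter_nat p" "\<Union>F \<in> p"
  shows "\<exists>A\<in>F. A \<in> p"
  using assms
proof (induction F rule: finite_induct)
  case empty
  then show ?case using ultrafilter_empty by simp
next
  case (insert A F)
  show ?case
  proof (cases "A \<in> p")
    case False
    then have "(A \<union> \<Union>F) \<inter> - A \<in> p"
      using insert ultrafilter_Compl_iff ultrafilter_Int by simp
    then have "\<Union>F \<in> p"
      using insert.prems(1) ultrafilter_mono by blast
    then show ?thesis using insert by blast
  qed simp
qed

lemma ultrafilter_residue_class: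
  assumes "ultrafilter_nat p" "m \<ge> 1"
  obtains j where "j < m" "{x. x mod m = j} \<in> p"
proof -
  have "\<Union>((\<lambda>j. {x. x mod m = j}) ` {..<m}) = UNIV"
    using assms(2) by auto
  then show thesis
    using that ultrafilter_finite_Union[of "(\<lambda>j. {x. x mod m = j}) ` {..<m}" p] assms(1)
      ultrafilter_UNIV by force
qed

definition proper_filter :: "nat set set \<Rightarrow> bool" where
  "proper_filter F \<longleftrightarrow> UNIV \<in> F \<and> {} \<notin> F \<and>
     (\<forall>A B. A \<in> F \<and> A \<subseteq> B \<longrightarrow> B \<in> F) \<and> (\<forall>A B. A \<in> F \<and> B \<in> F \<longrightarrow> A \<inter> B \<in> F)"

definition filter_base :: "nat set set \<Rightarrow> bool" where
  "filter_base G \<longleftrightarrow> G \<noteq> {} \<and> {} \<notin> G \<and> (\<forall>A\<in>G. \<forall>B\<in>G. \<exists>C\<in>G. C \<subseteq> A \<inter> B)"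

lemma proper_filterD:
  assumes "proper_filter F"
  shows "UNIV \<in> F" "{} \<notin> F" "A \<in> F \<Longrightarrow> A \<subseteq> B \<Longrightarrow> B \<in> F" "A \<in> F \<Longrightarrow> B \<in> F \<Longrightarrow> A \<inter> B \<in> F"
  using assms unfolding proper_filter_def by blast+

lemma ultrafilter_nat_iff_proper_filter:
  "ultrafilter_nat p \<longleftrightarrow> proper_filter p \<and> (\<forall>A. A \<in> p \<or> - A \<in> p)"
  unfolding ultrafilter_nat_def proper_filter_def by blast

lemma proper_filter_generated:
  assumes G: "filter_base G"
  shows "proper_filter {X. \<exists>A\<in>G. A \<subseteq> X}"
  unfolding proper_filter_def
proof (intro conjI allI impI)
  show "UNIV \<in> {X. \<exists>A\<in>G. A \<subseteq> X}" "{} \<notin> {X. \<exists>A\<in>G. A \<subseteq> X}"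
    using G unfolding filter_base_def by auto
  show "B \<in> {X. \<exists>A\<in>G. A \<subseteq> X}" if "A \<in> {X. \<exists>A\<in>G. A \<subseteq> X} \<and> A \<subseteq> B" for A B
    using that by blast
  fix A B assume "A \<in> {X. \<exists>A\<in>G. A \<subseteq> X} \<and> B \<in> {X. \<exists>A\<in>G. A \<subseteq> X}"
  then obtain A' B' where "A' \<in> G" "B' \<in> G" "A' \<subseteq> A" "B' \<subseteq> B" by blast
  with G obtain C where "C \<in> G" "C \<subseteq> A \<inter> B" unfolding filter_base_def by blast
  then show "A \<inter> B \<in> {X. \<exists>A\<in>G. A \<subseteq> X}" by blast
qed

lemma proper_filter_Union_chain:
  assumes "\<C> \<noteq> {}" "\<forall>F\<in>\<C>. proper_filter F" "chain\<^sub>\<subseteq> \<C>"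
  shows "proper_filter (\<Union>\<C>)"
  unfolding proper_filter_def
proof (intro conjI allI impI)
  show "UNIV \<in> \<Union>\<C>" "{} \<notin> \<Union>\<C>"
    using assms(1,2) unfolding proper_filter_def by auto
  show "B \<in> \<Union>\<C>" if "A \<in> \<Union>\<C> \<and> A \<subseteq> B" for A B
    using that assms(2) unfolding proper_filter_def by blast
  fix A B assume "A \<in> \<Union>\<C> \<and> B \<in> \<Union>\<C>"
  then obtain F where "F \<in> \<C>" "A \<in> F" "B \<in> F"
    using assms(3) unfolding chain_subset_def by blast
  then show "A \<inter> B \<in> \<Union>\<C>"
    using assms(2) unfolding proper_filter_def by blast
qed

lemma maximal_proper_filter_ultrafilter:
  assumes M: "proper_filter M" and max: "\<And>F. proper_filter F \<Longrightarrow> M \<subseteq> F \<Longrightarrow> F = M"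
  shows "ultrafilter_nat M"
  unfolding ultrafilter_nat_iff_proper_filter
proof (intro conjI allI M)
  fix A
  show "A \<in> M \<or> - A \<in> M"
  proof (rule disjCI)
    assume "- A \<notin> M"
    let ?G = "(\<lambda>B. B \<inter> A) ` M"
    have "filter_base ?G"
      unfolding filter_base_def
    proof (intro conjI ballI)
      show "?G \<noteq> {}" using proper_filterD(1)[OF M] by blast
      show "{} \<notin> ?G"
      proof
        assume "{} \<in> ?G"
        then obtain B where "B \<in> M" "B \<subseteq> - A" by blast
        then show False using \<open>- A \<notin> M\<close> proper_filterD(3)[OF M] by blast
      qed
      fix C D assume "C \<in> ?G" "D \<in> ?G"
      then obtain B1 B2 where "B1 \<in> M" "B2 \<in> M" "C = B1 \<inter> A" "D = B2 \<inter> A" by blast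
      moreover have "B1 \<inter> B2 \<in> M" using proper_filterD(4)[OF M] calculation(1,2) .
      ultimately show "\<exists>E\<in>?G. E \<subseteq> C \<inter> D" by (intro bexI[of _ "B1 \<inter> B2 \<inter> A"]) auto
    qed
    then have "proper_filter {X. \<exists>C\<in>?G. C \<subseteq> X}"
      by (rule proper_filter_generated)
    moreover have "M \<subseteq> {X. \<exists>C\<in>?G. C \<subseteq> X}" by blast
    ultimately have "{X. \<exists>C\<in>?G. C \<subseteq> X} = M" by (rule max)
    moreover have "A \<in> {X. \<exists>C\<in>?G. C \<subseteq> X}"
      using proper_filterD(1)[OF M] by blast
    ultimately show "A \<in> M" by simp
  qed
qed

lemma filter_base_ultrafilter:
  assumes "filter_base G"
  obtains p where "ultrafilter_nat p" "G \<subseteq> p"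
proof -
  let ?\<A> = "{F. proper_filter F \<and> G \<subseteq> F}"
  have "{X. \<exists>A\<in>G. A \<subseteq> X} \<in> ?\<A>"
    using proper_filter_generated[OF assms] by blast
  moreover have "\<Union>\<C> \<in> ?\<A>" if "\<C> \<noteq> {}" "subset.chain ?\<A> \<C>" for \<C>
    using that proper_filter_Union_chain[of \<C>]
    unfolding subset_chain_def chain_subset_def by blast
  ultimately obtain M where "M \<in> ?\<A>" and "\<forall>F\<in>?\<A>. M \<subseteq> F \<longrightarrow> F = M"
    using subset_Zorn_nonempty[of ?\<A>] by blast
  then have "ultrafilter_nat M" "G \<subseteq> M"
    using maximal_proper_filter_ultrafilter[of M] by auto
  then show thesis by (rule that)
qed

section \<open>The semigroup \<open>(\<beta>\<nat>, +)\<close>\<close>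

lemma shift_Int: "shift (A \<inter> B) n = shift A n \<inter> shift B n"
  and shift_Compl: "shift (- A) n = - shift A n"
  and shift_UNIV: "shift UNIV n = UNIV"
  and shift_mono: "A \<subseteq> B \<Longrightarrow> shift A n \<subseteq> shift B n"
  by (auto simp: shift_def)

text \<open>Since \<open>A \<in> x + q\<close> iff \<open>shift_set x A \<in> q\<close>,
  left translation \<open>q \<mapsto> x + q\<close> is continuous on \<open>\<beta>\<nat>\<close>.\<close>
definition shift_set :: "nat set set \<Rightarrow> nat set \<Rightarrow> nat set" where
  "shift_set x A = {n. shift A n \<in> x}"

lemma mem_uplus_iff: "A \<in> uplus x q \<longleftrightarrow> shift_set x A \<in> q"
  by (simp add: uplus_def shift_set_def)

lemma shift_set_Int: "ultrafilter_nat x \<Longrightarrow> shift_set x (A \<inter> B) = shift_set x A \<inter> shift_set x B"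
  and shift_set_Compl: "ultrafilter_nat x \<Longrightarrow> shift_set x (- A) = - shift_set x A"
  and shift_set_UNIV: "ultrafilter_nat x \<Longrightarrow> shift_set x UNIV = UNIV"
  and shift_set_mono: "ultrafilter_nat x \<Longrightarrow> A \<subseteq> B \<Longrightarrow> shift_set x A \<subseteq> shift_set x B"
  unfolding shift_set_def
  by (auto simp: shift_Int shift_Compl shift_UNIV ultrafilter_Int_iff ultrafilter_Compl_iff
      ultrafilter_UNIV intro: ultrafilter_mono[OF _ _ shift_mono])

lemma uplus_ultrafilter:
  assumes x: "ultrafilter_nat x" and q: "ultrafilter_nat q"
  shows "ultrafilter_nat (uplus x q)"
  unfolding ultrafilter_nat_def mem_uplus_iff
  using ultrafilter_UNIV[OF q] ultrafilter_Compl_iff[OF q] ultrafilter_Int[OF q] ultrafilter_mono[OF q]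
    ultrafilter_empty[OF q] shift_set_Int[OF x] shift_set_Compl[OF x] shift_set_UNIV[OF x]
    shift_set_mono[OF x]
  by (metis Compl_UNIV_eq)

lemma uplus_assoc: "uplus (uplus p q) s = uplus p (uplus q s)"
  unfolding uplus_def shift_def by (simp add: add.assoc)

definition principal :: "nat \<Rightarrow> nat set set" where
  "principal n = {A. n \<in> A}"

lemma principal_ultrafilter: "ultrafilter_nat (principal n)"
  unfolding ultrafilter_nat_def principal_def by auto

lemma uplus_principal: "uplus p (principal n) = {A. shift A n \<in> p}"
  unfolding uplus_def principal_def by auto

section \<open>Closed subsets of \<open>\<beta>\<nat>\<close>\<close>

text \<open>\<open>\<Inter>C\<close> consists of the sets lying in every member of \<open>C\<close>, and
  \<open>{p \<in> betaN. \<Inter>C \<subseteq> p}\<close> is the closure of \<open>C\<close> in the Stone topology of \<open>\<beta>\<nat>\<close>.\<close>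
definition closed_betaN :: "nat set set set \<Rightarrow> bool" where
  "closed_betaN C \<longleftrightarrow> C \<subseteq> betaN \<and> (\<forall>p\<in>betaN. \<Inter>C \<subseteq> p \<longrightarrow> p \<in> C)"

lemma closed_betaN_betaN: "closed_betaN betaN"
  unfolding closed_betaN_def by blast

lemma closed_betaN_ultrafilter: "closed_betaN C \<Longrightarrow> q \<in> C \<Longrightarrow> ultrafilter_nat q"
  unfolding closed_betaN_def by auto

lemma closed_betaN_Inter_chain:
  assumes ne: "\<C> \<noteq> {}" and cl: "\<And>X. X \<in> \<C> \<Longrightarrow> closed_betaN X \<and> X \<noteq> {}" and ch: "chain\<^sub>\<subseteq> \<C>"
  shows "closed_betaN (\<Inter>\<C>) \<and> \<Inter>\<C> \<noteq> {}"
proof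
  show "closed_betaN (\<Inter>\<C>)"
    unfolding closed_betaN_def
  proof (intro conjI ballI impI)
    show "\<Inter>\<C> \<subseteq> betaN" using ne cl unfolding closed_betaN_def by blast
    fix p assume p: "p \<in> betaN" "\<Inter>(\<Inter>\<C>) \<subseteq> p"
    show "p \<in> \<Inter>\<C>"
    proof
      fix X assume X: "X \<in> \<C>"
      then have "\<Inter>X \<subseteq> p" using p(2) by blast
      then show "p \<in> X" using cl[OF X] p(1) unfolding closed_betaN_def by blast
    qed
  qed
  let ?G = "\<Union>X\<in>\<C>. \<Inter>X"
  have "filter_base ?G"
    unfolding filter_base_def
  proof (intro conjI ballI)
    show "?G \<noteq> {}"
      using ne cl closed_betaN_ultrafilter ultrafilter_UNIV by blast
    show "{} \<notin> ?G"
      using cl closed_betaN_ultrafilter ultrafilter_empty by blast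
    fix A B assume "A \<in> ?G" "B \<in> ?G"
    then obtain X where "X \<in> \<C>" "A \<in> \<Inter>X" "B \<in> \<Inter>X"
      using ch unfolding chain_subset_def by (metis UN_E Inter_anti_mono in_mono)
    then have "A \<inter> B \<in> \<Inter>X"
      using cl closed_betaN_ultrafilter ultrafilter_Int by blast
    then show "\<exists>C\<in>?G. C \<subseteq> A \<inter> B" using \<open>X \<in> \<C>\<close> by blast
  qed
  then obtain p where p: "ultrafilter_nat p" "?G \<subseteq> p" by (rule filter_base_ultrafilter)
  have "p \<in> X" if "X \<in> \<C>" for X
  proof -
    have "\<Inter>X \<subseteq> p" using p(2) that by blast
    then show ?thesis using p(1) cl[OF that] unfolding closed_betaN_def by simp
  qed
  then show "\<Inter>\<C> \<noteq> {}" by blast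
qed

lemma subset_Zorn_minimal:
  assumes "\<A> \<noteq> {}" and ch: "\<And>\<C>. \<C> \<noteq> {} \<Longrightarrow> subset.chain \<A> \<C> \<Longrightarrow> \<Inter>\<C> \<in> \<A>"
  shows "\<exists>M\<in>\<A>. \<forall>X\<in>\<A>. X \<subseteq> M \<longrightarrow> X = M"
proof -
  have "\<exists>M\<in>uminus ` \<A>. \<forall>X\<in>uminus ` \<A>. M \<subseteq> X \<longrightarrow> X = M"
  proof (rule subset_Zorn_nonempty)
    show "uminus ` \<A> \<noteq> {}" using assms(1) by blast
    fix \<C> assume "\<C> \<noteq> {}" "subset.chain (uminus ` \<A>) \<C>"
    then have "uminus ` \<C> \<noteq> {}" "subset.chain \<A> (uminus ` \<C>)"
      unfolding subset_chain_def by (auto simp: image_subset_iff)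
    then have "\<Inter>(uminus ` \<C>) \<in> \<A>" by (rule ch)
    moreover have "\<Union>\<C> = - \<Inter>(uminus ` \<C>)" by auto
    ultimately show "\<Union>\<C> \<in> uminus ` \<A>" by blast
  qed
  then show ?thesis
    by (metis (no_types, lifting) Compl_subset_Compl_iff double_complement image_iff)
qed

lemma closed_betaN_minimal:
  assumes C: "closed_betaN C" "C \<noteq> {}" "P C"
    and P: "\<And>\<C>. \<C> \<noteq> {} \<Longrightarrow> (\<And>X. X \<in> \<C> \<Longrightarrow> closed_betaN X \<and> X \<noteq> {} \<and> P X) \<Longrightarrow>
      chain\<^sub>\<subseteq> \<C> \<Longrightarrow> P (\<Inter>\<C>)"
  obtains M where "M \<subseteq> C" "closed_betaN M" "M \<noteq> {}" "P M"
    "\<And>X. X \<subseteq> M \<Longrightarrow> closed_betaN X \<Longrightarrow> X \<noteq> {} \<Longrightarrow> P X \<Longrightarrow> X = M"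
proof -
  let ?\<A> = "{X. X \<subseteq> C \<and> closed_betaN X \<and> X \<noteq> {} \<and> P X}"
  have ne: "?\<A> \<noteq> {}" using C by blast
  have ch: "\<Inter>\<C> \<in> ?\<A>" if "\<C> \<noteq> {}" "subset.chain ?\<A> \<C>" for \<C>
  proof -
    have \<C>: "\<And>X. X \<in> \<C> \<Longrightarrow> closed_betaN X \<and> X \<noteq> {} \<and> P X" "chain\<^sub>\<subseteq> \<C>" "\<Inter>\<C> \<subseteq> C"
      using that unfolding subset_chain_def chain_subset_def by blast+
    then show ?thesis
      using closed_betaN_Inter_chain[OF \<open>\<C> \<noteq> {}\<close>] P[OF \<open>\<C> \<noteq> {}\<close>] by blast
  qed
  obtain M where "M \<in> ?\<A>" "\<forall>X\<in>?\<A>. X \<subseteq> M \<longrightarrow> X = M"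
    using subset_Zorn_minimal[OF ne ch] by blast
  then show thesis by (intro that[of M]) auto
qed

lemma filter_base_uplus_preimage:
  assumes x: "ultrafilter_nat x" and T: "closed_betaN T"
    and p: "ultrafilter_nat p" "\<Inter>(uplus x ` T) \<subseteq> p"
  shows "filter_base ((\<lambda>(F, A). F \<inter> shift_set x A) ` (\<Inter>T \<times> p))"
    (is "filter_base ?G")
  unfolding filter_base_def
proof (intro conjI ballI)
  show "?G \<noteq> {}"
    using T closed_betaN_ultrafilter ultrafilter_UNIV p(1) by blast
  show "{} \<notin> ?G"
  proof
    assume "{} \<in> ?G"
    then obtain F A where FA: "F \<in> \<Inter>T" "A \<in> p" "F \<inter> shift_set x A = {}" by blast
    have "- A \<in> uplus x q" if "q \<in> T" for q
    proof -
      have "ultrafilter_nat q" using T that closed_betaN_ultrafilter by blast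
      moreover have "F \<in> q" using FA(1) that by blast
      ultimately show ?thesis
        using FA(3) x ultrafilter_Int_nonempty ultrafilter_Compl_iff
        by (metis mem_uplus_iff shift_set_Compl)
    qed
    then have "- A \<in> p" using p(2) by blast
    then show False using FA(2) ultrafilter_Compl_iff[OF p(1)] by blast
  qed
  fix C D assume "C \<in> ?G" "D \<in> ?G"
  then obtain F1 A1 F2 A2 where FA: "F1 \<in> \<Inter>T" "A1 \<in> p" "C = F1 \<inter> shift_set x A1"
    "F2 \<in> \<Inter>T" "A2 \<in> p" "D = F2 \<inter> shift_set x A2" by blast
  have "F1 \<inter> F2 \<in> \<Inter>T"
    using FA T closed_betaN_ultrafilter ultrafilter_Int by blast
  moreover have "A1 \<inter> A2 \<in> p" using FA ultrafilter_Int[OF p(1)] by blast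
  moreover have "(F1 \<inter> F2) \<inter> shift_set x (A1 \<inter> A2) \<subseteq> C \<inter> D"
    using FA shift_set_Int[OF x] by auto
  ultimately show "\<exists>E\<in>?G. E \<subseteq> C \<inter> D" by blast
qed

lemma closed_betaN_image_uplus:
  assumes x: "ultrafilter_nat x" and T: "closed_betaN T"
  shows "closed_betaN (uplus x ` T)"
  unfolding closed_betaN_def
proof (intro conjI ballI impI)
  show "uplus x ` T \<subseteq> betaN"
    using T x uplus_ultrafilter closed_betaN_ultrafilter by auto
  fix p assume p: "p \<in> betaN" "\<Inter>(uplus x ` T) \<subseteq> p"
  then have up: "ultrafilter_nat p" by simp
  let ?G = "(\<lambda>(F, A). F \<inter> shift_set x A) ` (\<Inter>T \<times> p)"
  obtain q where q: "ultrafilter_nat q" "?G \<subseteq> q"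
    using filter_base_uplus_preimage[OF x T up p(2)] by (rule filter_base_ultrafilter)
  have "\<Inter>T \<subseteq> q"
  proof
    fix F assume "F \<in> \<Inter>T"
    then have "F \<inter> shift_set x UNIV \<in> ?G" using ultrafilter_UNIV[OF up] by blast
    then show "F \<in> q" using q(2) shift_set_UNIV[OF x] by auto
  qed
  then have "q \<in> T" using T q(1) unfolding closed_betaN_def by simp
  have "A \<in> uplus x q" if "A \<in> p" for A
  proof -
    have "UNIV \<inter> shift_set x A \<in> ?G"
      using that T closed_betaN_ultrafilter ultrafilter_UNIV by blast
    then show ?thesis using q(2) by (auto simp: mem_uplus_iff)
  qed
  then have "p = uplus x q"
    using ultrafilter_subset_eq[OF up uplus_ultrafilter[OF x q(1)]] by blast
  then show "p \<in> uplus x ` T" using \<open>q \<in> T\<close> by blast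
qed

lemma closed_betaN_stabiliser:
  assumes x: "ultrafilter_nat x" and T: "closed_betaN T"
  shows "closed_betaN {y\<in>T. uplus x y = x}"
  unfolding closed_betaN_def
proof (intro conjI ballI impI)
  show "{y\<in>T. uplus x y = x} \<subseteq> betaN" using T unfolding closed_betaN_def by blast
  fix p assume p: "p \<in> betaN" "\<Inter>{y\<in>T. uplus x y = x} \<subseteq> p"
  have "\<Inter>T \<subseteq> p" using p(2) by blast
  then have "p \<in> T" using T p(1) unfolding closed_betaN_def by blast
  have "shift_set x A \<in> p" if "A \<in> x" for A
  proof -
    have "shift_set x A \<in> \<Inter>{y\<in>T. uplus x y = x}"
      using that by (force simp flip: mem_uplus_iff)
    then show ?thesis using p(2) by blast
  qed
  then have "x \<subseteq> uplus x p" by (auto simp: mem_uplus_iff)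
  then have "uplus x p = x"
    using ultrafilter_subset_eq x uplus_ultrafilter p(1) by (metis betaN_iff)
  then show "p \<in> {y\<in>T. uplus x y = x}" using \<open>p \<in> T\<close> by blast
qed

lemma closed_subsemigroup_idempotent:
  assumes T: "closed_betaN T" "T \<noteq> {}" and sg: "\<forall>a\<in>T. \<forall>b\<in>T. uplus a b \<in> T"
  obtains e where "e \<in> T" "uplus e e = e"
proof -
  let ?P = "\<lambda>X. \<forall>a\<in>X. \<forall>b\<in>X. uplus a b \<in> X"
  obtain M where M: "M \<subseteq> T" "closed_betaN M" "M \<noteq> {}" "?P M"
    and M_min: "\<And>X. X \<subseteq> M \<Longrightarrow> closed_betaN X \<Longrightarrow> X \<noteq> {} \<Longrightarrow> ?P X \<Longrightarrow> X = M"
  proof (rule closed_betaN_minimal[of T ?P, OF T sg])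
    fix \<C> :: "nat set set set set"
    assume "\<And>X. X \<in> \<C> \<Longrightarrow> closed_betaN X \<and> X \<noteq> {} \<and> ?P X"
    then show "?P (\<Inter>\<C>)" by blast
  qed (rule that)
  obtain x where x: "x \<in> M" using M(3) by blast
  have ux: "ultrafilter_nat x" using M(2) x closed_betaN_ultrafilter by blast
  have "uplus x ` M = M"
  proof (rule M_min)
    show "uplus x ` M \<subseteq> M" using M(4) x by blast
    show "closed_betaN (uplus x ` M)" using closed_betaN_image_uplus[OF ux M(2)] .
    show "uplus x ` M \<noteq> {}" using M(3) by blast
    show "?P (uplus x ` M)"
      using M(4) x by (auto simp: uplus_assoc[symmetric]) (metis image_eqI uplus_assoc)
  qed
  then obtain y where "y \<in> M" "uplus x y = x" using x by (metis imageE)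
  have "{y\<in>M. uplus x y = x} = M"
  proof (rule M_min)
    show "{y\<in>M. uplus x y = x} \<noteq> {}" using \<open>y \<in> M\<close> \<open>uplus x y = x\<close> by blast
    show "closed_betaN {y\<in>M. uplus x y = x}" using closed_betaN_stabiliser[OF ux M(2)] .
    show "?P {y\<in>M. uplus x y = x}" using M(4) by (simp add: uplus_assoc[symmetric])
  qed blast
  then show thesis using that x M(1) by blast
qed

section \<open>Minimal idempotents\<close>

definition right_ideal :: "nat set set set \<Rightarrow> bool" where
  "right_ideal X \<longleftrightarrow> (\<forall>a\<in>X. \<forall>b\<in>betaN. uplus a b \<in> X)"

lemma two_sided_idealD:
  assumes "two_sided_ideal I"
  shows "I \<noteq> {}" "I \<subseteq> betaN" "p \<in> betaN \<Longrightarrow> q \<in> I \<Longrightarrow> uplus p q \<in> I"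
    "p \<in> betaN \<Longrightarrow> q \<in> I \<Longrightarrow> uplus q p \<in> I"
  using assms unfolding two_sided_ideal_def by blast+

lemma minimal_right_ideal_subset_smallest_ideal:
  assumes R: "closed_betaN R" "right_ideal R"
    and R_min: "\<And>X. X \<subseteq> R \<Longrightarrow> closed_betaN X \<Longrightarrow> X \<noteq> {} \<Longrightarrow> right_ideal X \<Longrightarrow> X = R"
  shows "R \<subseteq> smallest_ideal"
proof
  fix e assume e: "e \<in> R"
  have "e \<in> I" if I: "two_sided_ideal I" for I
  proof -
    obtain q where q: "q \<in> I" using two_sided_idealD(1)[OF I] by blast
    have "e \<in> betaN" using R(1) e unfolding closed_betaN_def by blast
    then have eq_I: "uplus e q \<in> I" using two_sided_idealD(3)[OF I _ q] by blast
    have "q \<in> betaN" using two_sided_idealD(2)[OF I] q by blast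
    then have eq_R: "uplus e q \<in> R" using R(2) e unfolding right_ideal_def by blast
    have "uplus (uplus e q) ` betaN = R"
    proof (rule R_min)
      show "uplus (uplus e q) ` betaN \<subseteq> R" using R(2) eq_R unfolding right_ideal_def by blast
      show "closed_betaN (uplus (uplus e q) ` betaN)"
        using closed_betaN_image_uplus closed_betaN_betaN closed_betaN_ultrafilter R(1) eq_R by blast
      show "uplus (uplus e q) ` betaN \<noteq> {}" using \<open>q \<in> betaN\<close> by blast
      show "right_ideal (uplus (uplus e q) ` betaN)"
        unfolding right_ideal_def by (auto simp: uplus_assoc uplus_ultrafilter)
    qed
    then obtain s where s: "s \<in> betaN" "e = uplus (uplus e q) s" using e by blast
    have "uplus (uplus e q) s \<in> I" using two_sided_idealD(4)[OF I s(1) eq_I] .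
    then show "e \<in> I" using s(2) by simp
  qed
  then show "e \<in> smallest_ideal" unfolding smallest_ideal_def by blast
qed

definition free_ultrafilters :: "nat set set set" where
  "free_ultrafilters = {q\<in>betaN. \<forall>k. {k..} \<in> q}"

lemma closed_betaN_free_ultrafilters: "closed_betaN free_ultrafilters"
  unfolding closed_betaN_def free_ultrafilters_def by auto

lemma free_ultrafilters_nonempty: "free_ultrafilters \<noteq> {}"
proof -
  have "filter_base (range (\<lambda>k::nat. {k..}))"
    unfolding filter_base_def
  proof (intro conjI ballI)
    fix A B assume "A \<in> range (\<lambda>k::nat. {k..})" "B \<in> range (\<lambda>k::nat. {k..})"
    then obtain a b where "A = {a..}" "B = {b..}" by blast
    then show "\<exists>C\<in>range (\<lambda>k::nat. {k..}). C \<subseteq> A \<inter> B"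
      by (intro bexI[of _ "{max a b..}"]) auto
  qed auto
  then obtain p where "ultrafilter_nat p" "range (\<lambda>k. {k..}) \<subseteq> p"
    by (rule filter_base_ultrafilter)
  then show ?thesis unfolding free_ultrafilters_def by auto
qed

lemma right_ideal_free_ultrafilters: "right_ideal free_ultrafilters"
  unfolding right_ideal_def
proof (intro ballI)
  fix a b assume a: "a \<in> free_ultrafilters" and b: "b \<in> betaN"
  have "{k..} \<subseteq> shift {k..} n" for k n by (auto simp: shift_def)
  then have "shift_set a {k..} = UNIV" for k
    using a ultrafilter_mono[of a "{k..}"] unfolding shift_set_def free_ultrafilters_def by auto
  then show "uplus a b \<in> free_ultrafilters"
    using a b uplus_ultrafilter ultrafilter_UNIV
    unfolding free_ultrafilters_def by (simp add: mem_uplus_iff)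
qed

lemma exists_minimal_idempotent: "\<exists>e. minimal_idempotent e"
proof -
  obtain R where R: "R \<subseteq> free_ultrafilters" "closed_betaN R" "R \<noteq> {}" "right_ideal R"
    and R_min: "\<And>X. X \<subseteq> R \<Longrightarrow> closed_betaN X \<Longrightarrow> X \<noteq> {} \<Longrightarrow> right_ideal X \<Longrightarrow> X = R"
  proof (rule closed_betaN_minimal[where P = right_ideal, OF closed_betaN_free_ultrafilters
        free_ultrafilters_nonempty right_ideal_free_ultrafilters])
    fix \<C> :: "nat set set set set"
    assume "\<And>X. X \<in> \<C> \<Longrightarrow> closed_betaN X \<and> X \<noteq> {} \<and> right_ideal X"
    then show "right_ideal (\<Inter>\<C>)" unfolding right_ideal_def by blast
  qed (rule that)
  have "\<forall>a\<in>R. \<forall>b\<in>R. uplus a b \<in> R"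
    using R(2,4) unfolding right_ideal_def closed_betaN_def by blast
  then obtain e where e: "e \<in> R" "uplus e e = e"
    using closed_subsemigroup_idempotent R(2,3) by blast
  have "ultrafilter_nat e" using R(2) e(1) closed_betaN_ultrafilter by blast
  moreover have "e \<in> smallest_ideal"
    using minimal_right_ideal_subset_smallest_ideal[OF R(2,4) R_min] e(1) by blast
  moreover have "nonprincipal e"
    unfolding nonprincipal_def
  proof (intro allI notI)
    fix n assume "{n} \<in> e"
    moreover have "{Suc n..} \<in> e" using R(1) e(1) unfolding free_ultrafilters_def by blast
    ultimately show False using ultrafilter_Int_nonempty[OF \<open>ultrafilter_nat e\<close>] by force
  qed
  ultimately show ?thesis
    unfolding minimal_idempotent_def using e(2) by auto
qed

lemma minimal_idempotentD:
  "minimal_idempotent p \<Longrightarrow> ultrafilter_nat p"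
  "minimal_idempotent p \<Longrightarrow> uplus p p = p"
  unfolding minimal_idempotent_def by auto

lemma idempotent_multiples:
  assumes p: "ultrafilter_nat p" and pp: "uplus p p = p" and m: "m \<ge> 1"
  shows "{x. m dvd x} \<in> p"
proof -
  obtain j where "j < m" and j: "{x. x mod m = j} \<in> p"
    using ultrafilter_residue_class[OF p m] .
  then have "shift_set p {x. x mod m = j} \<in> p"
    using pp mem_uplus_iff by metis
  moreover have "shift_set p {x. x mod m = j} \<subseteq> {x. m dvd x}"
  proof
    fix n assume "n \<in> shift_set p {x. x mod m = j}"
    then have "shift {x. x mod m = j} n \<inter> {x. x mod m = j} \<noteq> {}"
      using j ultrafilter_Int_nonempty[OF p] unfolding shift_set_def by blast
    then obtain x where "x mod m = (x + n) mod m" unfolding shift_def by auto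
    then show "n \<in> {x. m dvd x}" using mod_eq_dvd_iff_nat[of x "x + n" m] by simp
  qed
  ultimately show ?thesis using ultrafilter_mono[OF p] by blast
qed

section \<open>Dilations of minimal idempotents\<close>

definition uf_map :: "(nat \<Rightarrow> nat) \<Rightarrow> nat set set \<Rightarrow> nat set set" where
  "uf_map f p = {B. f -` B \<in> p}"

lemma ultrafilter_uf_map:
  assumes p: "ultrafilter_nat p"
  shows "ultrafilter_nat (uf_map f p)"
  unfolding ultrafilter_nat_def uf_map_def
  using ultrafilter_UNIV[OF p] ultrafilter_empty[OF p] ultrafilter_Int[OF p]
    ultrafilter_Compl_iff[OF p]
  by (auto simp: vimage_Compl intro: ultrafilter_mono[OF p _ vimage_mono])

lemma uf_map_surj:
  assumes f: "inj f" and q: "ultrafilter_nat q" and range: "range f \<in> q"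
  obtains w where "ultrafilter_nat w" "uf_map f w = q"
proof
  let ?w = "{B. f ` B \<in> q}"
  show "ultrafilter_nat ?w"
    unfolding ultrafilter_nat_def
  proof (intro conjI allI impI; simp)
    show "range f \<in> q" "{} \<notin> q" using range ultrafilter_empty[OF q] by auto
    show "f ` B \<in> q" if "f ` A \<in> q \<and> A \<subseteq> B" for A B
      using that ultrafilter_mono[OF q] by blast
    show "f ` (A \<inter> B) \<in> q" if "f ` A \<in> q \<and> f ` B \<in> q" for A B
      using that ultrafilter_Int[OF q] by (simp add: image_Int[OF f])
    show "f ` A \<in> q \<or> f ` (- A) \<in> q" for A
    proof (rule disjCI)
      assume "f ` (- A) \<notin> q"
      moreover have "f ` (- A) = range f \<inter> - f ` A"
        using f by (auto simp: Compl_eq_Diff_UNIV image_set_diff)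
      ultimately show "f ` A \<in> q"
        using range ultrafilter_Int[OF q] ultrafilter_Compl_iff[OF q] by metis
    qed
  qed
  have "f ` (f -` B) = B \<inter> range f" for B by auto
  then show "uf_map f ?w = q"
    unfolding uf_map_def using range ultrafilter_Int_iff[OF q] by auto
qed

lemma uf_map_mult_uplus:
  "uf_map ((*) a) (uplus p q) = uplus (uf_map ((*) a) p) (uf_map ((*) a) q)"
  unfolding uf_map_def uplus_def shift_def by (simp add: vimage_def distrib_left)

lemma multiples_in_translate:
  assumes q: "ultrafilter_nat q" and a: "a \<ge> 1"
  obtains c where "{x. a dvd x} \<in> uplus q (principal c)"
proof -
  obtain j where j: "j < a" "{x. x mod a = j} \<in> q"
    using ultrafilter_residue_class[OF q a] .
  have "{x. x mod a = j} \<subseteq> shift {x. a dvd x} (a - j)"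
  proof
    fix x assume "x \<in> {x. x mod a = j}"
    then have "a * (x div a) + j = x" using mult_div_mod_eq[of a x] by simp
    then have "x + (a - j) = a * (x div a + 1)"
      using j(1) by (simp only: distrib_left mult_1_right)
    then show "x \<in> shift {x. a dvd x} (a - j)" unfolding shift_def by simp
  qed
  then show thesis
    using that[of "a - j"] ultrafilter_mono[OF q j(2)] by (simp add: uplus_principal)
qed

lemma two_sided_ideal_generated:
  assumes w: "w \<in> betaN"
  shows "two_sided_ideal {uplus (uplus u w) v | u v. u \<in> betaN \<and> v \<in> betaN}"
  unfolding two_sided_ideal_def
proof (intro conjI ballI)
  let ?J = "{uplus (uplus u w) v | u v. u \<in> betaN \<and> v \<in> betaN}"
  show "?J \<noteq> {}" using w by blast
  show "?J \<subseteq> betaN" using w by (auto simp: uplus_ultrafilter)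
  fix p q assume p: "p \<in> betaN" and "q \<in> ?J"
  then obtain u v where uv: "u \<in> betaN" "v \<in> betaN" "q = uplus (uplus u w) v" by blast
  have "uplus p q = uplus (uplus (uplus p u) w) v" "uplus q p = uplus (uplus u w) (uplus v p)"
    using uv by (simp_all add: uplus_assoc)
  moreover have "uplus p u \<in> betaN" "uplus v p \<in> betaN"
    using p uv by (simp_all add: uplus_ultrafilter)
  ultimately show "uplus p q \<in> ?J" "uplus q p \<in> ?J"
    using uv by blast+
qed

lemma uf_map_mult_smallest_ideal:
  assumes p: "p \<in> smallest_ideal" and a: "a \<ge> 1"
  shows "uf_map ((*) a) p \<in> smallest_ideal"
  unfolding smallest_ideal_def
proof (intro InterI, simp)
  fix I assume I: "two_sided_ideal I"
  obtain q where q: "q \<in> I" using two_sided_idealD(1)[OF I] by blast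
  have uq: "ultrafilter_nat q" using q two_sided_idealD(2)[OF I] by auto
  obtain c where c: "{x. a dvd x} \<in> uplus q (principal c)"
    using multiples_in_translate[OF uq a] .
  have qc_I: "uplus q (principal c) \<in> I"
    using two_sided_idealD(4)[OF I _ q] principal_ultrafilter by simp
  have "range ((*) a) = {x. a dvd x}" by (auto simp: dvd_def)
  moreover have "inj ((*) a)" using a by (simp add: inj_on_def)
  ultimately obtain w where w: "ultrafilter_nat w" "uf_map ((*) a) w = uplus q (principal c)"
    using uf_map_surj c uplus_ultrafilter[OF uq principal_ultrafilter] by metis
  have "p \<in> {uplus (uplus u w) v | u v. u \<in> betaN \<and> v \<in> betaN}"
    using p two_sided_ideal_generated[of w] w(1) unfolding smallest_ideal_def by auto
  then obtain u v where uv: "u \<in> betaN" "v \<in> betaN" "p = uplus (uplus u w) v" by blast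
  then have "uf_map ((*) a) p
      = uplus (uplus (uf_map ((*) a) u) (uplus q (principal c))) (uf_map ((*) a) v)"
    using w(2) by (simp add: uf_map_mult_uplus)
  then show "uf_map ((*) a) p \<in> I"
    using two_sided_idealD(3,4)[OF I] qc_I uv ultrafilter_uf_map by simp
qed

lemma minimal_idempotent_uf_map_mult:
  assumes p: "minimal_idempotent p" and a: "a \<ge> 1"
  shows "minimal_idempotent (uf_map ((*) a) p)"
proof -
  have up: "ultrafilter_nat p" and np: "nonprincipal p" and pK: "p \<in> smallest_ideal"
    using p unfolding minimal_idempotent_def by auto
  have "nonprincipal (uf_map ((*) a) p)"
    unfolding nonprincipal_def
  proof (intro allI notI)
    fix n assume "{n} \<in> uf_map ((*) a) p"
    then have S: "{x. a * x = n} \<in> p" unfolding uf_map_def vimage_def by simp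
    have "{x. a * x = n} \<subseteq> {n div a}" using a by auto
    then have "{x. a * x = n} = {} \<or> {x. a * x = n} = {n div a}" by (rule subset_singletonD)
    then show False using S ultrafilter_empty[OF up] np unfolding nonprincipal_def by auto
  qed
  moreover have "uplus (uf_map ((*) a) p) (uf_map ((*) a) p) = uf_map ((*) a) p"
    using minimal_idempotentD(2)[OF p] by (metis uf_map_mult_uplus)
  ultimately show ?thesis
    using ultrafilter_uf_map[OF up] uf_map_mult_smallest_ideal[OF pK a]
    unfolding minimal_idempotent_def by simp
qed

section \<open>Central sets\<close>

lemma central_mono: "central A \<Longrightarrow> A \<subseteq> B \<Longrightarrow> central B"
  unfolding central_def minimal_idempotent_def using ultrafilter_mono by auto

lemma central_Int_multiples:
  assumes "central A" "m \<ge> 1"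
  shows "central (A \<inter> {x. m dvd x})"
  using assms idempotent_multiples minimal_idempotentD ultrafilter_Int
  unfolding central_def by metis

lemma central_multiples: "m \<ge> 1 \<Longrightarrow> central {x. m dvd x}"
  using exists_minimal_idempotent idempotent_multiples minimal_idempotentD
  unfolding central_def by metis

lemma central_nonempty: "central A \<Longrightarrow> A \<noteq> {}"
  unfolding central_def using minimal_idempotentD(1) ultrafilter_empty by blast

definition valuation_class :: "nat \<Rightarrow> nat \<Rightarrow> nat set" where
  "valuation_class r c = {2 ^ k * (2 * t + 1) | k t. k mod r = c}"

lemma odd_decomposition: "(y::nat) > 0 \<Longrightarrow> \<exists>k t. y = 2 ^ k * (2 * t + 1)"
proof (induction y rule: less_induct)
  case (less y)
  show ?case
  proof (cases "even y")
    case True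
    then obtain z where z: "y = 2 * z" by blast
    then have "z < y" "z > 0" using less.prems by auto
    then obtain k t where "z = 2 ^ k * (2 * t + 1)" using less.IH by blast
    then have "y = 2 ^ Suc k * (2 * t + 1)" using z by simp
    then show ?thesis by blast
  next
    case False
    then have "y = 2 ^ 0 * (2 * (y div 2) + 1)" by simp
    then show ?thesis by blast
  qed
qed

lemma power_dvd_odd_multiple: "(2::nat) ^ K dvd 2 ^ k * (2 * t + 1) \<Longrightarrow> K \<le> k"
proof (rule ccontr)
  assume dvd: "2 ^ K dvd 2 ^ k * (2 * t + 1)" and "\<not> K \<le> k"
  then have "(2::nat) ^ K = 2 ^ k * 2 ^ (K - k)" by (simp flip: power_add)
  then have "2 ^ k * 2 ^ (K - k) dvd (2::nat) ^ k * (2 * t + 1)" using dvd by simp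
  then have "2 ^ (K - k) dvd (2 * t + 1 :: nat)" by (rule dvd_mult_cancel) simp
  moreover have "(2::nat) dvd 2 ^ (K - k)" using \<open>\<not> K \<le> k\<close> by simp
  ultimately have "(2::nat) dvd 2 * t + 1" by (metis dvd_trans)
  then show False by simp
qed

lemma central_valuation_class:
  assumes r: "r \<ge> 1" and c: "c < r"
  shows "central (valuation_class r c)"
proof -
  obtain p where p: "minimal_idempotent p" using exists_minimal_idempotent by blast
  have up: "ultrafilter_nat p" using minimal_idempotentD(1)[OF p] .
  have "- {0} \<in> p"
    using p ultrafilter_Compl_iff[OF up] unfolding minimal_idempotent_def nonprincipal_def by blast
  moreover have "- {0} = (\<Union>c'<r. valuation_class r c')"
  proof (intro equalityI subsetI)
    fix y :: nat assume "y \<in> - {0}"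
    then have "y > 0" by simp
    then obtain k t where "y = 2 ^ k * (2 * t + 1)" using odd_decomposition by blast
    then have "y \<in> valuation_class r (k mod r)" unfolding valuation_class_def by blast
    then show "y \<in> (\<Union>c'<r. valuation_class r c')" using r by auto
  qed (auto simp: valuation_class_def)
  ultimately have "\<Union>(valuation_class r ` {..<r}) \<in> p" by simp
  then obtain c' where c': "c' < r" "valuation_class r c' \<in> p"
    using ultrafilter_finite_Union[of "valuation_class r ` {..<r}" p] up by auto
  define j where "j = c + r - c'"
  have "valuation_class r c' \<subseteq> (*) (2 ^ j) -` valuation_class r c"
  proof
    fix y assume "y \<in> valuation_class r c'"
    then obtain k t where y: "y = 2 ^ k * (2 * t + 1)" "k mod r = c'"
      unfolding valuation_class_def by blast
    have "(k + j) mod r = (c' + j) mod r" using y(2) mod_add_left_eq[of k r j] by simp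
    also have "c' + j = c + r" using c' unfolding j_def by simp
    also have "(c + r) mod r = c" using c by simp
    finally have "(k + j) mod r = c" .
    moreover have "2 ^ j * y = 2 ^ (k + j) * (2 * t + 1)"
      using y(1) by (simp add: power_add algebra_simps)
    ultimately show "y \<in> (*) (2 ^ j) -` valuation_class r c"
      unfolding valuation_class_def by blast
  qed
  then have "valuation_class r c \<in> uf_map ((*) (2 ^ j)) p"
    unfolding uf_map_def using ultrafilter_mono[OF up c'(2)] by blast
  moreover have "minimal_idempotent (uf_map ((*) (2 ^ j)) p)"
    using minimal_idempotent_uf_map_mult[OF p] by simp
  ultimately show ?thesis unfolding central_def by blast
qed

section \<open>The colouring\<close>

definition overflow_exponent :: "nat \<Rightarrow> nat \<Rightarrow> nat" where
  "overflow_exponent N x = (LEAST k. N < x mod 2 ^ k)"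

definition colour :: "nat \<Rightarrow> nat \<Rightarrow> nat \<Rightarrow> nat" where
  "colour r N x = (if x \<le> N then 1 else overflow_exponent N x mod r + 1)"

lemma colour_range: "r \<ge> 1 \<Longrightarrow> colour r N x \<in> {1..r}"
  unfolding colour_def by (simp add: Suc_leI)

lemma mod_add_dvd: "(m::nat) dvd b \<Longrightarrow> (a + b) mod m = a mod m"
  by (metis dvd_def mod_mult_self2 mult.commute)

lemma overflow_exponentI:
  assumes "N < x mod 2 ^ k" "\<And>j. N < x mod 2 ^ j \<Longrightarrow> k \<le> j"
  shows "overflow_exponent N x = k"
  unfolding overflow_exponent_def using assms by (rule Least_equality)

lemma overflow_exponent_bounds:
  assumes "N < x"
  shows "overflow_exponent N x \<le> x" "N < x mod 2 ^ overflow_exponent N x"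
    "\<And>j. N < x mod 2 ^ j \<Longrightarrow> overflow_exponent N x \<le> j"
proof -
  have "N < x mod 2 ^ x" using assms less_exp[of x] by simp
  then show "overflow_exponent N x \<le> x" "N < x mod 2 ^ overflow_exponent N x"
    unfolding overflow_exponent_def by (rule Least_le, rule LeastI)
  show "overflow_exponent N x \<le> j" if "N < x mod 2 ^ j" for j
    unfolding overflow_exponent_def using that by (rule Least_le)
qed

lemma colour_add_multiple:
  assumes n: "N < n" and y: "2 ^ n dvd y"
  shows "colour r N (n + y) = colour r N n"
proof -
  have eq: "(n + y) mod 2 ^ j = n mod 2 ^ j" if "j \<le> n" for j
    using that y by (metis dvd_trans le_imp_power_dvd mod_add_dvd)
  have "overflow_exponent N (n + y) = overflow_exponent N n"
  proof (rule overflow_exponentI)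
    show "N < (n + y) mod 2 ^ overflow_exponent N n"
      using overflow_exponent_bounds[OF n] eq by simp
    show "overflow_exponent N n \<le> j" if "N < (n + y) mod 2 ^ j" for j
      using that overflow_exponent_bounds[OF n] eq by (metis le_trans nat_le_linear)
  qed
  then show ?thesis unfolding colour_def using n by simp
qed

lemma colour_add_odd_multiple:
  assumes n: "n \<le> N" and k: "N < 2 ^ k"
  shows "colour r N (n + 2 ^ k * (2 * t + 1)) = (k + 1) mod r + 1"
proof -
  let ?y = "2 ^ k * (2 * t + 1) :: nat"
  have eq: "(n + ?y) mod 2 ^ j = n mod 2 ^ j" if "j \<le> k" for j
    using that by (metis dvd_mult2 le_imp_power_dvd mod_add_dvd)
  have "(n + ?y) mod 2 ^ (k + 1) = (n + 2 ^ k + 2 ^ (k + 1) * t) mod 2 ^ (k + 1)"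
    by (simp add: algebra_simps)
  also have "\<dots> = n + 2 ^ k" using n k by (simp add: mod_add_dvd)
  finally have top: "(n + ?y) mod 2 ^ (k + 1) = n + 2 ^ k" .
  have "overflow_exponent N (n + ?y) = k + 1"
  proof (rule overflow_exponentI)
    show "N < (n + ?y) mod 2 ^ (k + 1)" using top k by simp
    show "k + 1 \<le> j" if "N < (n + ?y) mod 2 ^ j" for j
    proof (rule ccontr)
      assume "\<not> k + 1 \<le> j"
      then have "(n + ?y) mod 2 ^ j = n mod 2 ^ j" using eq by simp
      then show False using that n mod_less_eq_dividend[of n "2 ^ j"] by linarith
    qed
  qed
  moreover have "\<not> n + ?y \<le> N" using k by (simp add: not_le less_le_trans[OF k] trans_less_add2)
  ultimately show ?thesis unfolding colour_def by simp
qed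

lemma central_shift_colour_large:
  assumes n: "N < n"
  shows "central (shift {x. colour r N x = i} n) \<longleftrightarrow> i = colour r N n"
proof
  assume "central (shift {x. colour r N x = i} n)"
  then obtain y where "y \<in> shift {x. colour r N x = i} n" "2 ^ n dvd y"
    using central_Int_multiples[of _ "2 ^ n"] central_nonempty by fastforce
  then show "i = colour r N n"
    using colour_add_multiple[OF n] by (simp add: shift_def add.commute)
next
  assume "i = colour r N n"
  then have "{x. 2 ^ n dvd x} \<subseteq> shift {x. colour r N x = i} n"
    using colour_add_multiple[OF n] by (auto simp: shift_def add.commute)
  then show "central (shift {x. colour r N x = i} n)"
    using central_mono[OF central_multiples[of "2 ^ n"]] by simp
qed

lemma central_shift_colour_small:
  assumes r: "r \<ge> 1" and n: "n \<le> N" and i: "i \<in> {1..r}"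
  shows "central (shift {x. colour r N x = i} n)"
proof -
  define c where "c = (i + r - 2) mod r"
  have "(c + 1) mod r = (i + r - 2 + 1) mod r"
    unfolding c_def by (rule mod_add_left_eq)
  also have "i + r - 2 + 1 = i - 1 + r" using i r by (simp only: atLeastAtMost_iff) presburger
  also have "(i - 1 + r) mod r = i - 1" unfolding mod_add_self2 using i by (intro mod_less) auto
  finally have "(c + 1) mod r + 1 = i" using i by simp
  have "valuation_class r c \<inter> {x. 2 ^ N dvd x} \<subseteq> shift {x. colour r N x = i} n"
  proof
    fix y assume "y \<in> valuation_class r c \<inter> {x. 2 ^ N dvd x}"
    then obtain k t where y: "y = 2 ^ k * (2 * t + 1)" "k mod r = c" "2 ^ N dvd y"
      unfolding valuation_class_def by blast
    have "N \<le> k" using power_dvd_odd_multiple y(1,3) by blast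
    then have "N < 2 ^ k" using less_exp[of k] by linarith
    then have "colour r N (n + y) = (k + 1) mod r + 1"
      using colour_add_odd_multiple[OF n] y(1) by blast
    also have "\<dots> = i" using y(2) \<open>(c + 1) mod r + 1 = i\<close> by (metis mod_add_left_eq)
    finally show "y \<in> shift {x. colour r N x = i} n" by (simp add: shift_def add.commute)
  qed
  moreover have "c < r" using r unfolding c_def by simp
  then have "central (valuation_class r c \<inter> {x. 2 ^ N dvd x})"
    using central_Int_multiples[OF central_valuation_class[OF r]] by simp
  ultimately show ?thesis using central_mono by blast
qed

theorem theorem6:
  fixes r N :: nat
  assumes "r \<ge> 1" and "N \<ge> 1"
  shows "\<exists>A :: nat \<Rightarrow> nat set.
           (\<Union>i\<in>{1..r}. A i) = UNIV \<and>
           (\<forall>i\<in>{1..r}. \<forall>j\<in>{1..r}. i \<noteq> j \<longrightarrow> A i \<inter> A j = {}) \<and>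
           (\<forall>i\<in>{1..r}. \<forall>n\<in>{1..N}. central (shift (A i) n)) \<and>
           (\<forall>n. n > N \<longrightarrow> (\<exists>!i. i \<in> {1..r} \<and> central (shift (A i) n)))"
proof -
  define A where "A i = {x. colour r N x = i}" for i
  have "(\<Union>i\<in>{1..r}. A i) = UNIV"
    using colour_range[OF assms(1)] unfolding A_def by blast
  moreover have "\<forall>i\<in>{1..r}. \<forall>j\<in>{1..r}. i \<noteq> j \<longrightarrow> A i \<inter> A j = {}"
    unfolding A_def by blast
  moreover have "\<forall>i\<in>{1..r}. \<forall>n\<in>{1..N}. central (shift (A i) n)"
    unfolding A_def using central_shift_colour_small[OF assms(1)] by simp
  moreover have "\<exists>!i. i \<in> {1..r} \<and> central (shift (A i) n)" if "n > N" for n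
    unfolding A_def using colour_range[OF assms(1)] central_shift_colour_large[OF that]
    by (intro ex1I[of _ "colour r N n"]) auto
  ultimately show ?thesis by blast
qed

end
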